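(* Let $x,y>0$ with $x\ne y$, and define for $t\in(-\min\{x,y\},\infty)$ \[ H_{x,y}(t)=H(x+t,y+t)=\frac{2}{\frac{1}{x+t}+\frac{1}{y+t}}. \] Then $H_{x,y}(t)$ is a Bernstein function of $t$ on $(-\min\{x,y\},\infty)$ and has the integral representation \[ H_{x,y}(t)=H(x,y)+t+\frac{(x-y)^2}{4}\int_0^\infty\bigl(1-e^{-tu}\bigr)e^{-(x+y)u/2}\,\mathrm{d}u . \] Consequently, \[ H(x,y)=A(x,y)-\frac{(x-y)^2}{2}\int_0^\infty e^{-(x+y)u}\,\mathrm{d}u \] and, for $y>0$ and $s>0$, \[ H(s,y+s)=s+\frac{y^2}{4}\int_0^\infty\bigl(1-e^{-su}\bigr)e^{-yu/2}\,\mathrm{d}u . \]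
   Context: For positive numbers $a,b$, the harmonic mean is $H(a,b)=\frac{2}{\frac1a+\frac1b}$ and the arithmetic mean is $A(a,b)=\frac{a+b}{2}$. A function $f$ on an interval $I\subseteq\mathbb{R}$ is completely monotonic on $I$ if it has derivatives of all orders on $I$ and $(-1)^n f^{(n)}(t)\ge 0$ for all $t\in I$ and all integers $n\ge0$. A function $f:I\to[0,\infty)$ is a Bernstein function on $I$ if it has derivatives of all orders and $f'$ is completely monotonic on $I$. *)

theory Defs
  imports "HOL-Analysis.Analysis"
begin

definition harmonic_mean :: "real \<Rightarrow> real \<Rightarrow> real" where
  "harmonic_mean a b = 2 / (1 / a + 1 / b)"

definition arith_mean :: "real \<Rightarrow> real \<Rightarrow> real" where
  "arith_mean a b = (a + b) / 2"

definition smooth_on :: "real set \<Rightarrow> (real \<Rightarrow> real) \<Rightarrow> bool" where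
  "smooth_on I f \<longleftrightarrow> (\<forall>n. \<forall>t\<in>I. ((deriv ^^ n) f) differentiable (at t))"

definition completely_monotonic_on :: "real set \<Rightarrow> (real \<Rightarrow> real) \<Rightarrow> bool" where
  "completely_monotonic_on I f \<longleftrightarrow>
     smooth_on I f \<and> (\<forall>n. \<forall>t\<in>I. (-1) ^ n * (deriv ^^ n) f t \<ge> 0)"

definition bernstein_on :: "real set \<Rightarrow> (real \<Rightarrow> real) \<Rightarrow> bool" where
  "bernstein_on I f \<longleftrightarrow>
     (\<forall>t\<in>I. f t \<ge> 0) \<and> smooth_on I f \<and> completely_monotonic_on I (deriv f)"

end

theory Submission
  imports Defs
begin

text \<open>Writing \<open>H(a, b) = A - ((a - b)/2)^2 / A\<close> with \<open>A = A(a, b)\<close>, the shifted mean is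
  \<open>H(x + t, y + t) = c + t - D/(c + t)\<close> with \<open>c = (x + y)/2\<close> and \<open>D = ((x - y)/2)^2\<close>. Its
  derivative \<open>1 + D/(c + t)^2\<close> is completely monotonic, and the Laplace transform
  \<open>1/c - 1/(c + t) = \<integral> (1 - exp(-t u)) exp(-c u) du\<close> over \<open>[0, \<infinity>)\<close> turns the closed form into the
  integral representation; the other two identities are the same closed form for \<open>(x, y)\<close> and
  \<open>(s, y + s)\<close>.\<close>

lemma harmonic_mean_eq_mid_minus:
  assumes "a \<noteq> 0" "b \<noteq> 0"
  shows "harmonic_mean a b = (a + b) / 2 - ((a - b) / 2)^2 / ((a + b) / 2)"
proof (cases "a + b = 0")
  case True
  then have "b = - a" by simp
  then show ?thesis by (simp add: harmonic_mean_def)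
next
  case False
  with assms show ?thesis
    unfolding harmonic_mean_def by (simp add: field_simps) (simp add: power2_eq_square algebra_simps)
qed

lemma has_real_derivative_inverse_power_shift:
  assumes "c + t > (0::real)"
  shows "((\<lambda>t. K / (c + t)^(n + 1)) has_real_derivative (- K * real (n + 1) / (c + t)^(n + 2))) (at t)"
proof -
  have "((\<lambda>t. (c + t)^(n + 1)) has_real_derivative real (n + 1) * (c + t)^n) (at t)"
    using DERIV_power[OF DERIV_add[OF DERIV_const DERIV_ident, of c t], of "n + 1"] by simp
  then have "((\<lambda>t. K / (c + t)^(n + 1)) has_real_derivative
      (0 * (c + t)^(n + 1) - K * (real (n + 1) * (c + t)^n)) / ((c + t)^(n + 1) * (c + t)^(n + 1))) (at t)"
    using assms by (intro DERIV_divide DERIV_const) auto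
  moreover have "(c + t)^(n + 1) * (c + t)^(n + 1) = (c + t)^n * (c + t)^(n + 2)"
    by (simp flip: power_add)
  ultimately show ?thesis
    using assms by simp
qed

definition hyperbola_deriv :: "real \<Rightarrow> real \<Rightarrow> nat \<Rightarrow> real \<Rightarrow> real" where
  "hyperbola_deriv c D n t =
     (if n = 0 then c + t else 0) + (if n = 1 then 1 else 0) - (-1)^n * D * fact n / (c + t)^(n + 1)"

lemma hyperbola_deriv_0: "hyperbola_deriv c D 0 t = c + t - D / (c + t)"
  by (simp add: hyperbola_deriv_def)

lemma has_real_derivative_hyperbola_deriv:
  assumes "c + t > 0"
  shows "(hyperbola_deriv c D n has_real_derivative hyperbola_deriv c D (Suc n) t) (at t)"
proof -
  have pole: "((\<lambda>t. (-1)^n * D * fact n / (c + t)^(n + 1)) has_real_derivative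
      (-1)^Suc n * D * fact (Suc n) / (c + t)^(Suc n + 1)) (at t)"
    using has_real_derivative_inverse_power_shift[OF assms, of "(-1)^n * D * fact n" n]
    by (simp add: algebra_simps)
  have poly: "((\<lambda>t. (if n = 0 then c + t else 0) + (if n = 1 then 1 else 0))
      has_real_derivative (if n = 0 then 1 else 0)) (at t)"
    by (cases "n = 0") (auto intro!: derivative_eq_intros)
  show ?thesis
    using DERIV_diff[OF poly pole] unfolding hyperbola_deriv_def[abs_def] by simp
qed

lemma higher_deriv_hyperbola_deriv:
  assumes "c + t > 0"
  shows "(deriv ^^ n) (hyperbola_deriv c D 0) t = hyperbola_deriv c D n t"
  using assms
proof (induction n arbitrary: t)
  case 0
  then show ?case by simp
next
  case (Suc n)
  have "open {z. c + z > (0::real)}"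
    by (intro open_Collect_less continuous_intros)
  then have "eventually (\<lambda>z. c + z > 0) (nhds t)"
    using Suc.prems eventually_nhds_in_open by fastforce
  then have "eventually (\<lambda>z. (deriv ^^ n) (hyperbola_deriv c D 0) z = hyperbola_deriv c D n z) (nhds t)"
    by eventually_elim (rule Suc.IH)
  then have "(deriv ^^ Suc n) (hyperbola_deriv c D 0) t = deriv (hyperbola_deriv c D n) t"
    by (simp add: deriv_cong_ev)
  also have "\<dots> = hyperbola_deriv c D (Suc n) t"
    by (rule DERIV_imp_deriv[OF has_real_derivative_hyperbola_deriv[OF Suc.prems]])
  finally show ?case .
qed

lemma hyperbola_deriv_Suc_alternating_nonneg:
  assumes "c + t > 0" "D \<ge> 0"
  shows "(-1)^n * hyperbola_deriv c D (Suc n) t \<ge> 0"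
proof -
  have sign: "(-1::real)^n * (-1)^Suc n = -1"
    by (simp flip: power_add)
  have "(-1)^n * hyperbola_deriv c D (Suc n) t
      = (-1)^n * (if n = 0 then 1 else 0) - ((-1)^n * (-1)^Suc n) * D * fact (Suc n) / (c + t)^(Suc n + 1)"
    unfolding hyperbola_deriv_def by (simp add: right_diff_distrib mult.assoc)
  also have "\<dots> = (-1)^n * (if n = 0 then 1 else 0) + D * fact (Suc n) / (c + t)^(Suc n + 1)"
    unfolding sign by simp
  finally have "(-1)^n * hyperbola_deriv c D (Suc n) t
      = (-1)^n * (if n = 0 then 1 else 0) + D * fact (Suc n) / (c + t)^(Suc n + 1)" .
  then show ?thesis
    using assms by (cases "n = 0") auto
qed

lemma deriv_funpow_deriv: "(deriv ^^ n) (deriv f) = (deriv ^^ Suc n) f"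
  by (simp add: funpow_Suc_right del: funpow.simps)

lemma bernstein_on_shifted_hyperbola:
  assumes "open S" "D \<ge> 0"
    and pos: "\<And>t. t \<in> S \<Longrightarrow> c + t > 0"
    and f_eq: "\<And>t. t \<in> S \<Longrightarrow> f t = c + t - D / (c + t)"
    and f_nonneg: "\<And>t. t \<in> S \<Longrightarrow> f t \<ge> 0"
  shows "bernstein_on S f"
proof -
  have higher: "(deriv ^^ n) f t = hyperbola_deriv c D n t" if "t \<in> S" for n t
  proof -
    have "eventually (\<lambda>z. f z = hyperbola_deriv c D 0 z) (nhds t)"
      using eventually_nhds_in_open[OF \<open>open S\<close> that]
      by eventually_elim (simp add: f_eq hyperbola_deriv_0)
    then have "(deriv ^^ n) f t = (deriv ^^ n) (hyperbola_deriv c D 0) t"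
      by (rule higher_deriv_cong_ev) simp
    then show ?thesis
      using higher_deriv_hyperbola_deriv[OF pos[OF that]] by simp
  qed
  have smooth: "smooth_on S f"
    unfolding smooth_on_def
  proof (intro allI ballI)
    fix n t
    assume "t \<in> S"
    have "((deriv ^^ n) f has_real_derivative hyperbola_deriv c D (Suc n) t) (at t)"
      by (rule has_field_derivative_transform_within_open
          [OF has_real_derivative_hyperbola_deriv[OF pos[OF \<open>t \<in> S\<close>]] \<open>open S\<close> \<open>t \<in> S\<close>])
        (simp add: higher)
    then show "(deriv ^^ n) f differentiable at t"
      using real_differentiable_def by blast
  qed
  show ?thesis
    unfolding bernstein_on_def completely_monotonic_on_def
  proof (intro conjI ballI allI)
    show "smooth_on S (deriv f)"
      using smooth unfolding smooth_on_def deriv_funpow_deriv by blast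
  next
    fix n t
    assume "t \<in> S"
    then show "(-1)^n * (deriv ^^ n) (deriv f) t \<ge> 0"
      unfolding deriv_funpow_deriv higher[OF \<open>t \<in> S\<close>]
      using hyperbola_deriv_Suc_alternating_nonneg pos \<open>D \<ge> 0\<close> by blast
  qed (use smooth f_nonneg in auto)
qed

lemma has_integral_exp_neg_mult:
  assumes "a > (0::real)"
  shows "((\<lambda>u. exp (- a * u)) has_integral 1 / a) {0..}"
  using has_integral_exp_minus_to_infinity[OF assms, of 0] by simp

lemma has_integral_one_minus_exp_mult_exp:
  assumes "b > (0::real)" "b + t > 0"
  shows "((\<lambda>u. (1 - exp (- t * u)) * exp (- b * u)) has_integral 1 / b - 1 / (b + t)) {0..}"
proof -
  have "(\<lambda>u. (1 - exp (- t * u)) * exp (- b * u)) = (\<lambda>u. exp (- b * u) - exp (- (b + t) * u))"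
    by (auto simp: fun_eq_iff algebra_simps simp flip: exp_add)
  then show ?thesis
    using has_integral_diff[OF has_integral_exp_neg_mult[of b] has_integral_exp_neg_mult[of "b + t"]] assms
    by simp
qed

lemma has_integral_one_minus_exp_mult_exp_half:
  assumes "b > (0::real)" "b / 2 + t > 0"
  shows "((\<lambda>u. (1 - exp (- t * u)) * exp (- b * u / 2)) has_integral 2 / b - 1 / (b / 2 + t)) {0..}"
  using has_integral_one_minus_exp_mult_exp[of "b / 2" t] assms by (simp add: mult.commute)

lemma harmonic_mean_shift:
  assumes "x + t > 0" "y + t > (0::real)"
  shows "harmonic_mean (x + t) (y + t) = (x + y) / 2 + t - ((x - y) / 2)^2 / ((x + y) / 2 + t)"
proof -
  have mid: "(x + t + (y + t)) / 2 = (x + y) / 2 + t" and half_diff: "(x + t - (y + t)) / 2 = (x - y) / 2"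
    by (simp_all add: field_simps)
  show ?thesis
    using harmonic_mean_eq_mid_minus[of "x + t" "y + t"] assms unfolding mid half_diff by simp
qed

lemma bernstein_on_harmonic_mean_shift:
  assumes "x > 0" "y > (0::real)"
  shows "bernstein_on {- min x y<..} (\<lambda>t. harmonic_mean (x + t) (y + t))"
proof (rule bernstein_on_shifted_hyperbola[where c = "(x + y) / 2" and D = "((x - y) / 2)^2"])
  fix t
  assume "t \<in> {- min x y<..}"
  then have "x + t > 0" "y + t > 0"
    by auto
  then show "(x + y) / 2 + t > 0"
    by (simp add: field_simps)
  show "harmonic_mean (x + t) (y + t) = (x + y) / 2 + t - ((x - y) / 2)^2 / ((x + y) / 2 + t)"
    using \<open>x + t > 0\<close> \<open>y + t > 0\<close> by (rule harmonic_mean_shift)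
  show "harmonic_mean (x + t) (y + t) \<ge> 0"
    using \<open>x + t > 0\<close> \<open>y + t > 0\<close> unfolding harmonic_mean_def by (simp add: add_pos_pos less_imp_le)
qed simp_all

lemma harmonic_mean_shift_integral:
  assumes "x > 0" "y > 0" "t > - min x y"
  shows "(\<lambda>u. (1 - exp (- t * u)) * exp (- (x + y) * u / 2)) integrable_on {0..}
    \<and> harmonic_mean (x + t) (y + t) = harmonic_mean x y + t
        + (x - y)^2 / 4 * integral {0..} (\<lambda>u. (1 - exp (- t * u)) * exp (- (x + y) * u / 2))"
proof
  define c where "c = (x + y) / 2"
  define D where "D = ((x - y) / 2)^2"
  have "x + t > 0" "y + t > 0" "c + t > 0"
    using assms by (auto simp: c_def field_simps)
  have int: "((\<lambda>u. (1 - exp (- t * u)) * exp (- (x + y) * u / 2)) has_integral 1 / c - 1 / (c + t)) {0..}"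
    using has_integral_one_minus_exp_mult_exp_half[of "x + y" t] \<open>c + t > 0\<close> assms
    by (simp add: c_def)
  then show "(\<lambda>u. (1 - exp (- t * u)) * exp (- (x + y) * u / 2)) integrable_on {0..}"
    by blast
  have "(x - y)^2 / 4 = D"
    by (simp add: D_def power_divide)
  then show "harmonic_mean (x + t) (y + t) = harmonic_mean x y + t
      + (x - y)^2 / 4 * integral {0..} (\<lambda>u. (1 - exp (- t * u)) * exp (- (x + y) * u / 2))"
    using harmonic_mean_shift[OF \<open>x + t > 0\<close> \<open>y + t > 0\<close>] harmonic_mean_shift[of x 0 y] assms
    unfolding integral_unique[OF int] c_def D_def by (simp add: right_diff_distrib)
qed

lemma harmonic_mean_eq_arith_mean_minus_integral:
  assumes "x > 0" "y > (0::real)"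
  shows "(\<lambda>u. exp (- (x + y) * u)) integrable_on {0..}
    \<and> harmonic_mean x y = arith_mean x y - (x - y)^2 / 2 * integral {0..} (\<lambda>u. exp (- (x + y) * u))"
proof
  have int: "((\<lambda>u. exp (- (x + y) * u)) has_integral 1 / (x + y)) {0..}"
    using assms by (intro has_integral_exp_neg_mult) simp
  then show "(\<lambda>u. exp (- (x + y) * u)) integrable_on {0..}"
    by blast
  show "harmonic_mean x y = arith_mean x y - (x - y)^2 / 2 * integral {0..} (\<lambda>u. exp (- (x + y) * u))"
    using assms harmonic_mean_eq_mid_minus[of x y] unfolding integral_unique[OF int]
    by (simp add: arith_mean_def field_simps power2_eq_square)
qed

lemma harmonic_mean_add_integral:
  assumes "s > 0" "y > (0::real)"
  shows "(\<lambda>u. (1 - exp (- s * u)) * exp (- y * u / 2)) integrable_on {0..}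
    \<and> harmonic_mean s (y + s) = s + y^2 / 4 * integral {0..} (\<lambda>u. (1 - exp (- s * u)) * exp (- y * u / 2))"
proof
  have int: "((\<lambda>u. (1 - exp (- s * u)) * exp (- y * u / 2)) has_integral 2 / y - 1 / (y / 2 + s)) {0..}"
    using assms by (intro has_integral_one_minus_exp_mult_exp_half) auto
  then show "(\<lambda>u. (1 - exp (- s * u)) * exp (- y * u / 2)) integrable_on {0..}"
    by blast
  show "harmonic_mean s (y + s) = s + y^2 / 4 * integral {0..} (\<lambda>u. (1 - exp (- s * u)) * exp (- y * u / 2))"
    using assms unfolding integral_unique[OF int] harmonic_mean_def
    by (simp add: divide_simps) (simp add: power2_eq_square algebra_simps)
qed

theorem theorem3p1:
  fixes x y :: real
  assumes "x > 0" and "y > 0" and "x \<noteq> y"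
  shows "bernstein_on {- min x y<..} (\<lambda>t. harmonic_mean (x + t) (y + t))
    \<and> (\<forall>t > - min x y.
          (\<lambda>u. (1 - exp (- t * u)) * exp (- (x + y) * u / 2)) integrable_on {0..}
        \<and> harmonic_mean (x + t) (y + t) = harmonic_mean x y + t
            + (x - y)^2 / 4 * integral {0..} (\<lambda>u. (1 - exp (- t * u)) * exp (- (x + y) * u / 2)))
    \<and> (\<lambda>u. exp (- (x + y) * u)) integrable_on {0..}
    \<and> harmonic_mean x y = arith_mean x y - (x - y)^2 / 2 * integral {0..} (\<lambda>u. exp (- (x + y) * u))
    \<and> (\<forall>s > 0. \<forall>y' > 0.
          (\<lambda>u. (1 - exp (- s * u)) * exp (- y' * u / 2)) integrable_on {0..}
        \<and> harmonic_mean s (y' + s) = s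
            + y'^2 / 4 * integral {0..} (\<lambda>u. (1 - exp (- s * u)) * exp (- y' * u / 2)))"
  using bernstein_on_harmonic_mean_shift[OF assms(1,2)] harmonic_mean_shift_integral[OF assms(1,2)]
    harmonic_mean_eq_arith_mean_minus_integral[OF assms(1,2)] harmonic_mean_add_integral
  by blast

end
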